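(* Let $U$ be a set with a total order $\preceq$, let $k>1$, and let $\mathcal P$ be a $k$-pattern in $U$ that admits at most one reconstruction from $\preceq$-consecutive points. If $n$ is a positive integer and $r$ is the remainder when $n$ is divided by $k-1$, then \[ S_{\mathcal P}(n)\le \frac{(n-r)(n+r-k+1)}{2k-2}. \]
   Context: A pattern in $U$ is a collection $\mathcal P$ of finite subsets of $U$ (its instances; in the paper, an equivalence class of subsets under some equivalence relation); it is a $k$-pattern if every instance has exactly $k$ elements. For finite $V\subseteq U$, $S_{\mathcal P}(V)=|\{P\subseteq V: P\in\mathcal P\}|$, and $S_{\mathcal P}(n)=\max\{S_{\mathcal P}(V):V\subseteq U,\ |V|=n\}$. The $i$th point of a finite set with respect to $\preceq$ is the element having exactly $i-1$ elements of the set $\preceq$-below it. Given $j\in\{1,\dots,k-1\}$ and $u\prec v$ in $U$, a reconstruction of $\mathcal P$ with $u,v$ as $j$th and $(j+1)$th points is an instance $P\in\mathcal P$ whose $j$th and $(j+1)$th points are $u$ and $v$ respectively. $\mathcal P$ admits at most one reconstruction from $\preceq$-consecutive points if for every $j\in\{1,\dots,k-1\}$ and every $u\prec v$ in $U$ there is at most one such reconstruction. *)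

theory Defs
  imports Complex_Main
begin

text \<open>The total order on U is the order of the linorder type, restricted to U.\<close>

definition is_k_pattern :: "'a set \<Rightarrow> nat \<Rightarrow> 'a set set \<Rightarrow> bool" where
  "is_k_pattern U k P \<longleftrightarrow> (\<forall>A\<in>P. A \<subseteq> U \<and> finite A \<and> card A = k)"

definition ith_point :: "'a::linorder set \<Rightarrow> nat \<Rightarrow> 'a \<Rightarrow> bool" where
  "ith_point A i x \<longleftrightarrow> x \<in> A \<and> card {y\<in>A. y < x} = i - 1"

definition is_reconstruction :: "'a::linorder set set \<Rightarrow> nat \<Rightarrow> 'a \<Rightarrow> 'a \<Rightarrow> 'a set \<Rightarrow> bool" where
  "is_reconstruction P j u v A \<longleftrightarrow> A \<in> P \<and> ith_point A j u \<and> ith_point A (j + 1) v"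

definition at_most_one_reconstruction ::
  "'a::linorder set \<Rightarrow> nat \<Rightarrow> 'a set set \<Rightarrow> bool" where
  "at_most_one_reconstruction U k P \<longleftrightarrow>
     (\<forall>j\<in>{1..k-1}. \<forall>u\<in>U. \<forall>v\<in>U. u < v \<longrightarrow>
        (\<forall>A B. is_reconstruction P j u v A \<and> is_reconstruction P j u v B \<longrightarrow> A = B))"

definition S_set :: "'a set set \<Rightarrow> 'a set \<Rightarrow> nat" where
  "S_set P V = card {A\<in>P. A \<subseteq> V}"

end

theory Submission
  imports Defs
begin

text \<open>Cut the sorted set V into k - 1 consecutive blocks of sizes as equal as possible:
  r blocks of size q + 1 and the rest of size q, where n = (k - 1) q + r. The first point of
  an instance A \<subseteq> V lies in block 1 or later and its last point before the end of block k - 1,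
  so for some j the j-th point of A is in block j or later while the (j+1)-th is still in
  block j. Hence both lie in block j, and by uniqueness of reconstructions A is determined by j
  and that pair. So S(V) is at most the number of pairs inside blocks,
  r \<cdot> C(q+1, 2) + (k - 1 - r) \<cdot> C(q, 2), which is the stated bound.\<close>

definition rank :: "'a::linorder set \<Rightarrow> 'a \<Rightarrow> nat" where
  "rank A x = card {y\<in>A. y < x}"

definition block :: "'a::linorder set \<Rightarrow> (nat \<Rightarrow> nat) \<Rightarrow> nat \<Rightarrow> 'a set" where
  "block V c j = {x\<in>V. c (j - 1) \<le> rank V x \<and> rank V x < c j}"

lemma ith_point_iff_rank: "ith_point A i x \<longleftrightarrow> x \<in> A \<and> rank A x = i - 1"
  unfolding ith_point_def rank_def ..

lemma rank_strict_mono: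
  assumes "finite A" "x \<in> A" "x < y"
  shows "rank A x < rank A y"
  unfolding rank_def using assms by (intro psubset_card_mono) auto

lemma rank_less_card:
  assumes "finite A" "x \<in> A"
  shows "rank A x < card A"
  unfolding rank_def using assms by (intro psubset_card_mono) auto

lemma inj_on_rank:
  assumes "finite A"
  shows "inj_on (rank A) A"
proof (rule inj_onI)
  fix x y assume "x \<in> A" "y \<in> A" "rank A x = rank A y"
  then show "x = y"
    using rank_strict_mono[OF assms, of x y] rank_strict_mono[OF assms, of y x]
    by (cases x y rule: linorder_cases) auto
qed

lemma rank_image:
  assumes "finite A"
  shows "rank A ` A = {0..<card A}"
proof (rule card_subset_eq)
  show "rank A ` A \<subseteq> {0..<card A}"
    using rank_less_card[OF assms] by auto
  show "card (rank A ` A) = card {0..<card A}"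
    using card_image[OF inj_on_rank[OF assms]] by simp
qed simp

lemma ith_point_exists:
  assumes "finite A" "1 \<le> i" "i \<le> card A"
  shows "\<exists>x. ith_point A i x"
proof -
  have "i - 1 \<in> rank A ` A"
    using assms by (simp add: rank_image)
  then show ?thesis
    by (auto simp: ith_point_iff_rank)
qed

lemma ith_point_strict_mono:
  assumes "finite A" "ith_point A i x" "ith_point A i' y" "1 \<le> i" "i < i'"
  shows "x < y"
proof (rule ccontr)
  have x: "rank A x = i - 1" and y: "y \<in> A" "rank A y = i' - 1"
    using assms(2,3) by (simp_all add: ith_point_iff_rank)
  assume "\<not> x < y"
  then have "y < x \<or> y = x"
    by auto
  then have "rank A y \<le> rank A x"
    using rank_strict_mono[OF assms(1) y(1), of x] by auto
  then show False
    using x y(2) assms(4,5) by arith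
qed

lemma nat_exists_flip:
  fixes Q :: "nat \<Rightarrow> bool"
  shows "1 \<le> k \<Longrightarrow> Q 1 \<Longrightarrow> \<not> Q k \<Longrightarrow> \<exists>j. 1 \<le> j \<and> j < k \<and> Q j \<and> \<not> Q (j + 1)"
proof (induction k)
  case 0
  then show ?case by simp
next
  case (Suc k)
  show ?case
  proof (cases "Q k")
    case True
    then show ?thesis
      using Suc.prems by (intro exI[of _ k]) (auto simp: le_Suc_eq)
  next
    case False
    then have "1 \<le> k"
      using Suc.prems by (cases k) auto
    then show ?thesis
      using Suc.IH[OF _ Suc.prems(2) False] by force
  qed
qed

lemma card_block_le:
  assumes "finite V"
  shows "card (block V c j) \<le> c j - c (j - 1)"
proof -
  have "card (block V c j) = card (rank V ` block V c j)"
    by (rule card_image[symmetric], rule inj_on_subset[OF inj_on_rank[OF assms]])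
       (auto simp: block_def)
  also have "\<dots> \<le> card {c (j - 1)..<c j}"
    by (intro card_mono) (auto simp: block_def)
  finally show ?thesis
    by simp
qed

lemma consecutive_points_in_block:
  assumes "is_k_pattern U k P" "0 < k" "A \<in> P" "A \<subseteq> V" "finite V"
    and "c 0 = 0" "card V \<le> c (k - 1)"
  obtains j u v where "j \<in> {1..k - 1}" "u < v" "ith_point A j u" "ith_point A (j + 1) v"
    "u \<in> block V c j" "v \<in> block V c j"
proof -
  have fA: "finite A" and cA: "card A = k"
    using assms(1,3) unfolding is_k_pattern_def by auto
  have "\<forall>i. \<exists>x. 1 \<le> i \<and> i \<le> k \<longrightarrow> ith_point A i x"
    using ith_point_exists[OF fA] cA by blast
  then obtain a where a: "\<And>i. 1 \<le> i \<Longrightarrow> i \<le> k \<Longrightarrow> ith_point A i (a i)"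
    by metis
  have aV: "a i \<in> V" if "1 \<le> i" "i \<le> k" for i
    using a[OF that] assms(4) unfolding ith_point_def by auto
  have "\<not> c (k - 1) \<le> rank V (a k)"
    using rank_less_card[OF assms(5) aV[of k]] assms(2,7) by simp
  then obtain j where j: "1 \<le> j" "j < k" "c (j - 1) \<le> rank V (a j)" "rank V (a (j + 1)) < c j"
    using nat_exists_flip[of k "\<lambda>i. c (i - 1) \<le> rank V (a i)"] assms(2,6) by auto
  have lt: "a j < a (j + 1)"
    using ith_point_strict_mono[OF fA a[of j] a[of "j + 1"]] j by simp
  have "rank V (a j) < rank V (a (j + 1))"
    using rank_strict_mono[OF assms(5) aV lt] j by simp
  then have blocks: "a j \<in> block V c j" "a (j + 1) \<in> block V c j"
    unfolding block_def using j aV[of j] aV[of "j + 1"] by auto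
  have "j \<in> {1..k - 1}" "ith_point A j (a j)" "ith_point A (j + 1) (a (j + 1))"
    using a j by auto
  then show ?thesis
    by (intro that[OF _ lt _ _ blocks])
qed

lemma S_set_le_sum_gap_pairs:
  assumes "is_k_pattern U k P" "at_most_one_reconstruction U k P" "0 < k"
    and "V \<subseteq> U" "finite V" "c 0 = 0" "card V \<le> c (k - 1)"
  shows "S_set P V \<le> (\<Sum>j\<in>{1..k - 1}. (c j - c (j - 1)) choose 2)"
proof -
  define T where "T = Sigma {1..k - 1} (\<lambda>j. {B. B \<subseteq> block V c j \<and> card B = 2})"
  define R where "R A p \<longleftrightarrow> (\<exists>u v. snd p = {u, v} \<and> u < v \<and>
      ith_point A (fst p) u \<and> ith_point A (fst p + 1) v)" for A and p :: "nat \<times> 'a set"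
  have fin_block: "finite (block V c j)" for j
    using assms(5) by (simp add: block_def)
  have "card {A\<in>P. A \<subseteq> V} \<le> card T"
  proof (rule card_le_if_inj_on_rel[of T _ R])
    show "finite T"
      unfolding T_def using fin_block by (intro finite_SigmaI) auto
  next
    fix A assume "A \<in> {A\<in>P. A \<subseteq> V}"
    then obtain j u v where "j \<in> {1..k - 1}" "u < v" "ith_point A j u" "ith_point A (j + 1) v"
      "u \<in> block V c j" "v \<in> block V c j"
      using consecutive_points_in_block[OF assms(1,3) _ _ assms(5-7)] by blast
    then show "\<exists>p. p \<in> T \<and> R A p"
      by (intro exI[of _ "(j, {u, v})"]) (auto simp: T_def R_def)
  next
    fix A1 A2 p assume A: "A1 \<in> {A\<in>P. A \<subseteq> V}" "A2 \<in> {A\<in>P. A \<subseteq> V}" "p \<in> T" "R A1 p" "R A2 p"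
    obtain j B where p: "p = (j, B)" by (cases p)
    have j: "j \<in> {1..k - 1}"
      using A(3) unfolding p T_def by auto
    obtain u v where uv: "B = {u, v}" "u < v" "ith_point A1 j u" "ith_point A1 (j + 1) v"
      using A(4) unfolding R_def p by auto
    obtain u' v' where uv': "B = {u', v'}" "u' < v'" "ith_point A2 j u'" "ith_point A2 (j + 1) v'"
      using A(5) unfolding R_def p by auto
    have "u' = u" "v' = v"
      using uv uv' by (auto simp: doubleton_eq_iff)
    moreover have "u \<in> U" "v \<in> U"
      using uv A(1) assms(4) unfolding ith_point_def by auto
    ultimately show "A1 = A2"
      using assms(2) j uv uv' A(1,2)
      unfolding at_most_one_reconstruction_def is_reconstruction_def by blast
  qed
  also have "card T = (\<Sum>j\<in>{1..k - 1}. card (block V c j) choose 2)"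
    unfolding T_def using fin_block by (simp add: card_SigmaI n_subsets)
  also have "\<dots> \<le> (\<Sum>j\<in>{1..k - 1}. (c j - c (j - 1)) choose 2)"
    by (intro sum_mono binomial_right_mono card_block_le assms(5))
  finally show ?thesis
    unfolding S_set_def .
qed

text \<open>The balanced cut of n points into m blocks: the first n mod m blocks get one extra point.\<close>
definition balanced_cut :: "nat \<Rightarrow> nat \<Rightarrow> nat \<Rightarrow> nat" where
  "balanced_cut n m j = j * (n div m) + min j (n mod m)"

lemma balanced_cut_gap:
  assumes "1 \<le> j"
  shows "balanced_cut n m j - balanced_cut n m (j - 1) = n div m + (if j \<le> n mod m then 1 else 0)"
  using assms by (cases j) (auto simp: balanced_cut_def)

lemma balanced_cut_last:
  assumes "0 < m"
  shows "balanced_cut n m m = n"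
  using assms by (simp add: balanced_cut_def mod_less_divisor)

lemma sum_balanced_gap_pairs:
  assumes "0 < m"
  shows "(\<Sum>j\<in>{1..m}. (balanced_cut n m j - balanced_cut n m (j - 1)) choose 2)
           = n mod m * ((n div m + 1) choose 2) + (m - n mod m) * ((n div m) choose 2)"
proof -
  let ?q = "n div m" and ?r = "n mod m"
  let ?g = "\<lambda>j. (balanced_cut n m j - balanced_cut n m (j - 1)) choose 2"
  have "{1..m} = {1..?r} \<union> {?r + 1..m}"
    using mod_less_divisor[OF assms, of n] by auto
  then have "sum ?g {1..m} = sum ?g {1..?r} + sum ?g {?r + 1..m}"
    by (simp add: sum.union_disjoint ivl_disj_int)
  also have "\<dots> = (\<Sum>j\<in>{1..?r}. (?q + 1) choose 2) + (\<Sum>j\<in>{?r + 1..m}. ?q choose 2)"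
    by (intro arg_cong2[where f = "(+)"] sum.cong refl; subst balanced_cut_gap) auto
  finally show ?thesis
    by simp
qed

lemma real_choose_two: "real (x choose 2) = real x * (real x - 1) / 2"
proof -
  have "even (x * (x - 1))"
    by (cases "even x") auto
  then have "2 * (x choose 2) = x * (x - 1)"
    by (simp add: choose_two)
  then have "2 * real (x choose 2) = real x * real (x - 1)"
    by (metis of_nat_mult of_nat_numeral)
  then show ?thesis
    by (cases x) auto
qed

lemma balanced_pairs_closed_form:
  assumes "0 < m" "n = m * q + r" "r \<le> m"
  shows "real (r * ((q + 1) choose 2) + (m - r) * (q choose 2))
           = (real n - real r) * (real n + real r - real m) / (2 * real m)"
proof -
  have "real (r * ((q + 1) choose 2) + (m - r) * (q choose 2))
      = real r * ((real q + 1) * real q / 2) + (real m - real r) * (real q * (real q - 1) / 2)"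
    using assms(3) by (simp add: real_choose_two of_nat_diff)
  also have "\<dots> = (real m * real q) * (real m * real q + 2 * real r - real m) / (2 * real m)"
    using assms(1) by (simp add: field_simps)
  finally show ?thesis
    using assms(2) by (simp add: algebra_simps)
qed

theorem mainTheorem3:
  fixes U :: "'a::linorder set" and P :: "'a set set" and k n r :: nat
  assumes "k > 1"
    and "is_k_pattern U k P"
    and "at_most_one_reconstruction U k P"
    and "n > 0"
    and "r = n mod (k - 1)"
  shows "\<forall>V. V \<subseteq> U \<and> finite V \<and> card V = n \<longrightarrow>
           real (S_set P V) \<le> (real n - real r) * (real n + real r - real k + 1) / (2 * real k - 2)"
proof (intro allI impI)
  fix V assume V: "V \<subseteq> U \<and> finite V \<and> card V = n"
  define m where "m = k - 1"
  have m: "0 < m" "real k = real m + 1" "r = n mod m"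
    using assms(1,5) by (auto simp: m_def)
  have "S_set P V \<le> (\<Sum>j\<in>{1..m}. (balanced_cut n m j - balanced_cut n m (j - 1)) choose 2)"
    using S_set_le_sum_gap_pairs[OF assms(2,3), of V "balanced_cut n m"] assms(1) V
    unfolding m_def[symmetric] balanced_cut_last[OF m(1)] by (simp add: balanced_cut_def)
  also have "\<dots> = r * ((n div m + 1) choose 2) + (m - r) * ((n div m) choose 2)"
    unfolding m(3) by (rule sum_balanced_gap_pairs[OF m(1)])
  finally have "real (S_set P V) \<le> real (r * ((n div m + 1) choose 2) + (m - r) * ((n div m) choose 2))"
    by (simp only: of_nat_le_iff)
  also have "\<dots> = (real n - real r) * (real n + real r - real m) / (2 * real m)"
    unfolding m(3)
    by (rule balanced_pairs_closed_form[OF m(1) mult_div_mod_eq[symmetric]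
          less_imp_le[OF mod_less_divisor[OF m(1)]]])
  finally show "real (S_set P V) \<le> (real n - real r) * (real n + real r - real k + 1) / (2 * real k - 2)"
    unfolding m(2) by (simp add: algebra_simps)
qed

end
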